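(* Let $(X,d,f)$ be a dynamical system and $\mathcal{A}=\{\mathcal{U}_n\}_{n\in\mathbb{N}}$ a tame defining sequence of $(X,d)$. (i) If $f$ has the shadowing property, then $f$ has the finite shadowing property and the inverse system $(\hookrightarrow,\mathcal{PO}(\mathcal{U}_n))$ satisfies the Mittag-Leffler Condition. (ii) Suppose in addition that $\mathcal{A}$ is complete and $f$ is uniformly continuous. If $f$ has the finite shadowing property and $(\hookrightarrow,\mathcal{PO}(\mathcal{U}_n))$ satisfies the Mittag-Leffler Condition, then $f$ has the shadowing property.
   Context: Spaces are nonempty separable metrizable; a dynamical system $(X,d,f)$ has admissible metric $d$ and continuous $f:X\to X$. A partition is a cover by pairwise disjoint nonempty clopen sets. A defining sequence is a sequence of partitions $\{\mathcal{U}_n\}$, each refining the previous, whose union is a basis; complete if nested sequences $U_n\in\mathcal{U}_n$ have nonempty intersection; tame if $\sup\{\operatorname{diam}O:O\in\mathcal{U}_n\}\to0$ and each $\mathcal{U}_n$ is $\rho_n$-separated for some $\rho_n>0$ (points of distinct elements are at distance $\ge\rho_n$). Shadowing notions: a $\delta$-pseudo-orbit is a finite or infinite sequence $(x_n)$ with $d(f(x_n),x_{n+1})<\delta$; it is $\varepsilon$-shadowed by $x$ if $d(f^n(x),x_n)<\varepsilon$ for all indices. Finite shadowing property: $\forall\varepsilon\,\exists\delta$ every finite $\delta$-pseudo-orbit is $\varepsilon$-shadowed; shadowing property: same for infinite ones. $\mathcal{PO}(\mathcal{U})=\{(O_i)_{i\in\mathbb{N}}\in\mathcal{U}^{\mathbb{N}}: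 f(O_i)\cap O_{i+1}\ne\emptyset\ \forall i\}$. The map $\hookrightarrow:\mathcal{PO}(\mathcal{U}_{n+1})\to\mathcal{PO}(\mathcal{U}_n)$ sends $(O_i)$ to the unique $(V_i)\in\mathcal{U}_n^{\mathbb{N}}$ with $O_i\subseteq V_i$. An inverse system $(g_m,X_m)$, $g_m:X_{m+1}\to X_m$, satisfies the Mittag-Leffler Condition if for every $N$ there is $k>N$ such that $g_N\circ\cdots\circ g_k(X_{k+1})=g_N\circ\cdots\circ g_i(X_{i+1})$ for all $i\ge k$. *)

theory Defs
  imports "HOL-Analysis.Analysis"
begin

text \<open>The space X is the whole type 'a of class metric_space (so d = dist and the
topology is the metric topology).\<close>

definition separable_space :: "'a::metric_space itself \<Rightarrow> bool" where
  "separable_space _ \<longleftrightarrow> (\<exists>D::'a set. countable D \<and> closure D = UNIV)"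

definition is_partition :: "'a::topological_space set set \<Rightarrow> bool" where
  "is_partition \<U> \<longleftrightarrow>
     (\<Union>\<U> = UNIV) \<and>
     (\<forall>W\<in>\<U>. W \<noteq> {} \<and> open W \<and> closed W) \<and>
     (\<forall>W\<in>\<U>. \<forall>W'\<in>\<U>. W \<noteq> W' \<longrightarrow> W \<inter> W' = {})"

definition refines :: "'a set set \<Rightarrow> 'a set set \<Rightarrow> bool" where
  "refines \<V> \<U> \<longleftrightarrow> (\<forall>V\<in>\<V>. \<exists>U\<in>\<U>. V \<subseteq> U)"

definition defining_sequence :: "(nat \<Rightarrow> 'a::topological_space set set) \<Rightarrow> bool" where
  "defining_sequence \<U> \<longleftrightarrow>
     (\<forall>n. is_partition (\<U> n)) \<and>
     (\<forall>n. refines (\<U> (Suc n)) (\<U> n)) \<and>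
     topological_basis (\<Union>n. \<U> n)"

definition complete_defseq :: "(nat \<Rightarrow> 'a::topological_space set set) \<Rightarrow> bool" where
  "complete_defseq \<U> \<longleftrightarrow>
     (\<forall>V. (\<forall>n. V n \<in> \<U> n) \<and> (\<forall>n. V (Suc n) \<subseteq> V n) \<longrightarrow> (\<Inter>n. V n) \<noteq> {})"

text \<open>sup of diameters tends to 0, written out with explicit distances
(the library's diameter is 0 on unbounded sets, so we avoid it).\<close>
definition tame_defseq :: "(nat \<Rightarrow> 'a::metric_space set set) \<Rightarrow> bool" where
  "tame_defseq \<U> \<longleftrightarrow>
     (\<forall>\<epsilon>>0. \<exists>N. \<forall>n\<ge>N. \<forall>W\<in>\<U> n. \<forall>x\<in>W. \<forall>y\<in>W. dist x y \<le> \<epsilon>) \<and>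
     (\<forall>n. \<exists>\<rho>>0. \<forall>W\<in>\<U> n. \<forall>W'\<in>\<U> n. W \<noteq> W' \<longrightarrow>
          (\<forall>x\<in>W. \<forall>y\<in>W'. dist x y \<ge> \<rho>))"

definition finite_shadowing :: "('a::metric_space \<Rightarrow> 'a) \<Rightarrow> bool" where
  "finite_shadowing f \<longleftrightarrow>
     (\<forall>\<epsilon>>0. \<exists>\<delta>>0. \<forall>(xs::nat \<Rightarrow> 'a) (N::nat).
        (\<forall>i<N. dist (f (xs i)) (xs (Suc i)) < \<delta>) \<longrightarrow>
        (\<exists>x. \<forall>i\<le>N. dist ((f ^^ i) x) (xs i) < \<epsilon>))"

definition shadowing :: "('a::metric_space \<Rightarrow> 'a) \<Rightarrow> bool" where
  "shadowing f \<longleftrightarrow>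
     (\<forall>\<epsilon>>0. \<exists>\<delta>>0. \<forall>xs::nat \<Rightarrow> 'a.
        (\<forall>i. dist (f (xs i)) (xs (Suc i)) < \<delta>) \<longrightarrow>
        (\<exists>x. \<forall>i. dist ((f ^^ i) x) (xs i) < \<epsilon>))"

definition PO :: "('a \<Rightarrow> 'a) \<Rightarrow> 'a set set \<Rightarrow> (nat \<Rightarrow> 'a set) set" where
  "PO f \<U> = {W. (\<forall>i. W i \<in> \<U>) \<and> (\<forall>i. f ` (W i) \<inter> W (Suc i) \<noteq> {})}"

definition parent :: "'a set set \<Rightarrow> 'a set \<Rightarrow> 'a set" where
  "parent \<U> W = (THE V. V \<in> \<U> \<and> W \<subseteq> V)"

definition hook :: "(nat \<Rightarrow> 'a set set) \<Rightarrow> nat \<Rightarrow> (nat \<Rightarrow> 'a set) \<Rightarrow> (nat \<Rightarrow> 'a set)" where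
  "hook \<U> n W = (\<lambda>i. parent (\<U> n) (W i))"

fun bond_comp :: "(nat \<Rightarrow> 'b \<Rightarrow> 'b) \<Rightarrow> nat \<Rightarrow> nat \<Rightarrow> 'b \<Rightarrow> 'b" where
  "bond_comp g N 0 = g N"
| "bond_comp g N (Suc m) = bond_comp g N m \<circ> g (N + Suc m)"

text \<open>Inverse system (g_m, X_m), g_m : X_(m+1) -> X_m\<close>
definition mittag_leffler :: "(nat \<Rightarrow> 'b \<Rightarrow> 'b) \<Rightarrow> (nat \<Rightarrow> 'b set) \<Rightarrow> bool" where
  "mittag_leffler g X \<longleftrightarrow>
     (\<forall>N. \<exists>k>N. \<forall>i\<ge>k.
        bond_comp g N (k - N) ` X (Suc k) = bond_comp g N (i - N) ` X (Suc i))"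

end

(*
  Fix a level N and a separation constant \<rho> of the partition U_N, and let \<delta> be the
  shadowing constant for \<rho>. Once the cells of U_k have diameter below \<delta>/2, any point choice
  along a chain in PO(U_k) is a \<delta>-pseudo-orbit, so its image in PO(U_N) is the chain of U_N-cells
  of a true orbit. Such chains lie in the image of every PO(U_i), hence the images of the
  PO(U_i) in PO(U_N) are eventually constant.

  Given \<epsilon>, take N with U_N-cells of diameter at most \<epsilon>/2 and a level L at which the
  images in PO(U_N) have stabilised. Finite shadowing, applied to the separation constant of U_L,
  shows that the U_L-cells of a \<delta>-pseudo-orbit form a chain in PO(U_L). Stability lets its image
  in PO(U_N) be lifted level by level to a thread of chains (dependent choice); completeness
  gives a point z_j in the nested cells of each coordinate, and continuity with vanishing
  diameters forces f z_j = z_(j+1). The orbit of z_0 then \<epsilon>-shadows the pseudo-orbit.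
*)

theory Submission
  imports Defs
begin

definition cell :: "(nat \<Rightarrow> 'a set set) \<Rightarrow> nat \<Rightarrow> 'a \<Rightarrow> 'a set" where
  "cell \<U> n x = (THE W. W \<in> \<U> n \<and> x \<in> W)"

definition orbit_cells :: "('a \<Rightarrow> 'a) \<Rightarrow> (nat \<Rightarrow> 'a set set) \<Rightarrow> nat \<Rightarrow> 'a \<Rightarrow> nat \<Rightarrow> 'a set" where
  "orbit_cells f \<U> n x = (\<lambda>j. cell \<U> n ((f ^^ j) x))"

lemma PO_choose_points:
  assumes "W \<in> PO f \<U>"
  obtains y where "\<And>j. y j \<in> W j" "\<And>j. f (y j) \<in> W (Suc j)"
proof -
  have "\<forall>j. \<exists>y. y \<in> W j \<and> f y \<in> W (Suc j)"
    using assms unfolding PO_def by blast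
  then show thesis
    using that by metis
qed

lemma shadowing_imp_finite_shadowing:
  assumes "shadowing f"
  shows "finite_shadowing f"
  unfolding finite_shadowing_def
proof (intro allI impI)
  fix \<epsilon> :: real assume "\<epsilon> > 0"
  then obtain \<delta> where "\<delta> > 0" and shadow: "\<And>xs. (\<forall>i. dist (f (xs i)) (xs (Suc i)) < \<delta>) \<Longrightarrow>
      \<exists>x. \<forall>i. dist ((f ^^ i) x) (xs i) < \<epsilon>"
    using assms unfolding shadowing_def by blast
  show "\<exists>\<delta>>0. \<forall>xs N. (\<forall>i<N. dist (f (xs i)) (xs (Suc i)) < \<delta>) \<longrightarrow>
      (\<exists>x. \<forall>i\<le>N. dist ((f ^^ i) x) (xs i) < \<epsilon>)"
  proof (intro exI[of _ \<delta>] conjI allI impI \<open>\<delta> > 0\<close>)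
    fix xs N assume pseudo: "\<forall>i<N. dist (f (xs i)) (xs (Suc i)) < \<delta>"
    \<comment> \<open>continue the finite pseudo-orbit by the true orbit of its last point\<close>
    define ys where "ys i = (if i \<le> N then xs i else (f ^^ (i - N)) (xs N))" for i
    have "dist (f (ys i)) (ys (Suc i)) < \<delta>" for i
    proof (cases "i < N")
      case False
      then have "ys (Suc i) = f (ys i)"
        by (auto simp: ys_def Suc_diff_le)
      then show ?thesis
        using \<open>\<delta> > 0\<close> by simp
    qed (use pseudo in \<open>simp add: ys_def\<close>)
    then obtain x where x: "\<forall>i. dist ((f ^^ i) x) (ys i) < \<epsilon>"
      using shadow by blast
    have "dist ((f ^^ i) x) (xs i) < \<epsilon>" if "i \<le> N" for i
      using x[rule_format, of i] that by (simp add: ys_def)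
    then show "\<exists>x. \<forall>i\<le>N. dist ((f ^^ i) x) (xs i) < \<epsilon>"
      by blast
  qed
qed

lemma tame_defseq_small_cells:
  assumes "tame_defseq \<U>" "\<epsilon> > 0"
  obtains N where "\<And>n W x y. N \<le> n \<Longrightarrow> W \<in> \<U> n \<Longrightarrow> x \<in> W \<Longrightarrow> y \<in> W \<Longrightarrow> dist x y \<le> \<epsilon>"
proof -
  have "\<forall>\<epsilon>>0. \<exists>N. \<forall>n\<ge>N. \<forall>W\<in>\<U> n. \<forall>x\<in>W. \<forall>y\<in>W. dist x y \<le> \<epsilon>"
    using assms(1) unfolding tame_defseq_def by (rule conjunct1)
  with assms(2) obtain N where "\<forall>n\<ge>N. \<forall>W\<in>\<U> n. \<forall>x\<in>W. \<forall>y\<in>W. dist x y \<le> \<epsilon>"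
    by blast
  then show thesis
    by (intro that[of N]) simp
qed

locale defining_seq =
  fixes \<U> :: "nat \<Rightarrow> 'a::topological_space set set"
  assumes defseq: "defining_sequence \<U>"
begin

lemma is_partition_level: "is_partition (\<U> n)"
  using defseq unfolding defining_sequence_def by simp

lemma partition_element_nonempty: "W \<in> \<U> n \<Longrightarrow> W \<noteq> {}"
  using is_partition_level unfolding is_partition_def by simp

lemma partition_element_unique: "W \<in> \<U> n \<Longrightarrow> W' \<in> \<U> n \<Longrightarrow> x \<in> W \<Longrightarrow> x \<in> W' \<Longrightarrow> W = W'"
  using is_partition_level unfolding is_partition_def by blast

lemma cell_eqI:
  assumes "W \<in> \<U> n" "x \<in> W"
  shows "cell \<U> n x = W"
  unfolding cell_def
proof (rule the_equality)
  show "V = W" if "V \<in> \<U> n \<and> x \<in> V" for V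
    using that assms partition_element_unique by blast
qed (use assms in simp)

lemma cell_in_partition: "cell \<U> n x \<in> \<U> n"
  and mem_cell: "x \<in> cell \<U> n x"
proof -
  have "x \<in> \<Union>(\<U> n)"
    using is_partition_level[of n] unfolding is_partition_def by simp
  then obtain W where "W \<in> \<U> n" "x \<in> W"
    by blast
  then show "cell \<U> n x \<in> \<U> n" "x \<in> cell \<U> n x"
    using cell_eqI by simp_all
qed

lemma cell_antimono: "m \<le> n \<Longrightarrow> cell \<U> n x \<subseteq> cell \<U> m x"
proof (induction rule: dec_induct)
  case (step k)
  obtain B where "B \<in> \<U> k" "cell \<U> (Suc k) x \<subseteq> B"
    using defseq cell_in_partition unfolding defining_sequence_def refines_def by blast
  then have "cell \<U> (Suc k) x \<subseteq> cell \<U> k x"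
    using cell_eqI mem_cell by blast
  with step.IH show ?case by blast
qed simp

lemma parent_eq_cell:
  assumes "m \<le> n" "A \<in> \<U> n" "x \<in> A"
  shows "parent (\<U> m) A = cell \<U> m x"
  unfolding parent_def
proof (rule the_equality)
  have "A = cell \<U> n x"
    using cell_eqI[OF assms(2,3)] by simp
  then show "cell \<U> m x \<in> \<U> m \<and> A \<subseteq> cell \<U> m x"
    using cell_antimono[OF assms(1)] cell_in_partition by simp
next
  show "V = cell \<U> m x" if "V \<in> \<U> m \<and> A \<subseteq> V" for V
    using that assms(3) cell_eqI by blast
qed

lemma parent_in_partition:
  assumes "m \<le> n" "A \<in> \<U> n"
  shows "parent (\<U> m) A \<in> \<U> m" "A \<subseteq> parent (\<U> m) A"
proof -
  obtain x where x: "x \<in> A"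
    using assms(2) partition_element_nonempty by blast
  have "parent (\<U> m) A = cell \<U> m x"
    using parent_eq_cell[OF assms x] .
  moreover have "A = cell \<U> n x"
    using cell_eqI[OF assms(2) x] by simp
  ultimately show "parent (\<U> m) A \<in> \<U> m" "A \<subseteq> parent (\<U> m) A"
    using cell_in_partition cell_antimono[OF assms(1)] by simp_all
qed

lemma hook_eq_cells:
  assumes "m \<le> n" "\<And>j. W j \<in> \<U> n" "\<And>j. y j \<in> W j"
  shows "hook \<U> m W = (\<lambda>j. cell \<U> m (y j))"
  using assms parent_eq_cell unfolding hook_def by blast

lemma hook_hook:
  assumes "m \<le> l" "l \<le> n" "\<And>j. W j \<in> \<U> n"
  shows "hook \<U> m (hook \<U> l W) = hook \<U> m W"
proof -
  have "\<forall>j. \<exists>x. x \<in> W j"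
    using assms(3) partition_element_nonempty by blast
  then obtain y where y: "\<And>j. y j \<in> W j"
    by metis
  have l: "hook \<U> l W = (\<lambda>j. cell \<U> l (y j))"
    by (rule hook_eq_cells[OF assms(2,3) y])
  have "hook \<U> m (hook \<U> l W) = (\<lambda>j. cell \<U> m (y j))"
    by (rule hook_eq_cells[OF assms(1)]) (simp_all add: l cell_in_partition mem_cell)
  also have "\<dots> = hook \<U> m W"
    by (rule hook_eq_cells[OF order_trans[OF assms(1,2)] assms(3) y, symmetric])
  finally show ?thesis .
qed

lemma hook_PO:
  assumes "m \<le> n" "W \<in> PO f (\<U> n)"
  shows "hook \<U> m W \<in> PO f (\<U> m)"
proof -
  have W: "W j \<in> \<U> n" "f ` W j \<inter> W (Suc j) \<noteq> {}" for j
    using assms(2) unfolding PO_def by auto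
  have V: "hook \<U> m W j \<in> \<U> m" "W j \<subseteq> hook \<U> m W j" for j
    using parent_in_partition[OF assms(1) W(1)] unfolding hook_def by auto
  have "f ` W j \<inter> W (Suc j) \<subseteq> f ` hook \<U> m W j \<inter> hook \<U> m W (Suc j)" for j
    using V(2) by (intro Int_mono image_mono)
  with V(1) W(2) show ?thesis
    unfolding PO_def by blast
qed

lemma hook_orbit_cells: "m \<le> n \<Longrightarrow> hook \<U> m (orbit_cells f \<U> n x) = orbit_cells f \<U> m x"
  unfolding orbit_cells_def by (rule hook_eq_cells[OF _ cell_in_partition mem_cell])

lemma orbit_cells_PO: "orbit_cells f \<U> n x \<in> PO f (\<U> n)"
proof -
  have "f ((f ^^ j) x) \<in> f ` cell \<U> n ((f ^^ j) x) \<inter> cell \<U> n ((f ^^ Suc j) x)" for j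
    using mem_cell by simp
  then show ?thesis
    unfolding PO_def orbit_cells_def using cell_in_partition by blast
qed

lemma bond_comp_hook: "(\<And>j. W j \<in> \<U> (N + l + 1)) \<Longrightarrow> bond_comp (hook \<U>) N l W = hook \<U> N W"
proof (induction l arbitrary: W)
  case (Suc l)
  have "\<And>j. hook \<U> (N + Suc l) W j \<in> \<U> (N + l + 1)"
    using Suc.prems parent_in_partition(1)[of "N + Suc l" "Suc (N + Suc l)"] unfolding hook_def by simp
  then show ?case
    using Suc hook_hook[of N "N + Suc l" "N + Suc l + 1"] by simp
qed simp

lemma hook_image_antimono:
  assumes "N \<le> i" "i \<le> j"
  shows "hook \<U> N ` PO f (\<U> j) \<subseteq> hook \<U> N ` PO f (\<U> i)"
proof
  fix V assume "V \<in> hook \<U> N ` PO f (\<U> j)"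
  then obtain W where W: "W \<in> PO f (\<U> j)" "V = hook \<U> N W"
    by blast
  then have "V = hook \<U> N (hook \<U> i W)"
    using hook_hook assms unfolding PO_def by simp
  then show "V \<in> hook \<U> N ` PO f (\<U> i)"
    using hook_PO W assms by blast
qed

lemma mittag_leffler_hook_iff:
  "mittag_leffler (hook \<U>) (\<lambda>n. PO f (\<U> n)) \<longleftrightarrow>
     (\<forall>N. \<exists>k>N. \<forall>i\<ge>k. hook \<U> N ` PO f (\<U> (Suc k)) = hook \<U> N ` PO f (\<U> (Suc i)))"
proof -
  have bond: "bond_comp (hook \<U>) N (i - N) ` PO f (\<U> (Suc i)) = hook \<U> N ` PO f (\<U> (Suc i))"
    if "N \<le> i" for N i
  proof (rule image_cong[OF refl])
    fix W assume "W \<in> PO f (\<U> (Suc i))"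
    then have "W j \<in> \<U> (N + (i - N) + 1)" for j
      using that unfolding PO_def by simp
    then show "bond_comp (hook \<U>) N (i - N) W = hook \<U> N W"
      by (rule bond_comp_hook)
  qed
  show ?thesis
    unfolding mittag_leffler_def by (intro all_cong1 ex_cong all_cong) (simp add: bond)
qed

lemma stable_image_lift:
  assumes k: "\<And>N. N < k N"
    and stable: "\<And>N i. k N \<le> i \<Longrightarrow> hook \<U> N ` PO f (\<U> (Suc (k N))) = hook \<U> N ` PO f (\<U> (Suc i))"
    and V: "V \<in> hook \<U> N ` PO f (\<U> (Suc (k N)))"
  shows "\<exists>D\<in>hook \<U> (Suc N) ` PO f (\<U> (Suc (k (Suc N)))). V = hook \<U> N D"
proof -
  define i where "i = max (k N) (k (Suc N))"
  have "k N \<le> i" "k (Suc N) \<le> i"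
    by (simp_all add: i_def)
  then have "V \<in> hook \<U> N ` PO f (\<U> (Suc i))"
    using V stable by simp
  then obtain W where W: "W \<in> PO f (\<U> (Suc i))" "V = hook \<U> N W"
    by blast
  have "hook \<U> (Suc N) W \<in> hook \<U> (Suc N) ` PO f (\<U> (Suc (k (Suc N))))"
    using W(1) stable[OF \<open>k (Suc N) \<le> i\<close>] by simp
  moreover have "V = hook \<U> N (hook \<U> (Suc N) W)"
    using W k[of "Suc N"] hook_hook[of N "Suc N" "Suc i" W] unfolding PO_def i_def by simp
  ultimately show ?thesis
    by blast
qed

lemma mittag_leffler_threads:
  assumes "mittag_leffler (hook \<U>) (\<lambda>n. PO f (\<U> n))"
  obtains k where "\<And>N. N < k N"
    "\<And>N V. V \<in> hook \<U> N ` PO f (\<U> (Suc (k N))) \<Longrightarrow>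
       \<exists>C. C 0 = V \<and> (\<forall>n. C n \<in> PO f (\<U> (N + n)) \<and> C n = hook \<U> (N + n) (C (Suc n)))"
proof -
  have "\<forall>N. \<exists>k>N. \<forall>i\<ge>k. hook \<U> N ` PO f (\<U> (Suc k)) = hook \<U> N ` PO f (\<U> (Suc i))"
    using assms unfolding mittag_leffler_hook_iff .
  then obtain k where k: "\<And>N. N < k N"
    and stable: "\<And>N i. k N \<le> i \<Longrightarrow> hook \<U> N ` PO f (\<U> (Suc (k N))) = hook \<U> N ` PO f (\<U> (Suc i))"
    by (metis choice)
  define S where "S N = hook \<U> N ` PO f (\<U> (Suc (k N)))" for N
  have S_PO: "S N \<subseteq> PO f (\<U> N)" for N
    using hook_PO[of N "Suc (k N)"] k[of N] unfolding S_def by auto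
  show thesis
  proof (rule that[OF k])
    fix N V assume "V \<in> hook \<U> N ` PO f (\<U> (Suc (k N)))"
    then have "V \<in> S N"
      unfolding S_def .
    have "\<exists>C. \<forall>n. (C n \<in> S (N + n) \<and> (n = 0 \<longrightarrow> C n = V)) \<and> C n = hook \<U> (N + n) (C (Suc n))"
    proof (rule dependent_nat_choice)
      show "\<exists>D. D \<in> S (N + 0) \<and> (0 = 0 \<longrightarrow> D = V)"
        using \<open>V \<in> S N\<close> by simp
    next
      fix D n assume "D \<in> S (N + n) \<and> (n = 0 \<longrightarrow> D = V)"
      then show "\<exists>D'. (D' \<in> S (N + Suc n) \<and> (Suc n = 0 \<longrightarrow> D' = V)) \<and> D = hook \<U> (N + n) D'"
        using stable_image_lift[OF k stable] unfolding S_def by auto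
    qed
    then show "\<exists>C. C 0 = V \<and> (\<forall>n. C n \<in> PO f (\<U> (N + n)) \<and> C n = hook \<U> (N + n) (C (Suc n)))"
      using S_PO by blast
  qed
qed

lemma complete_defseq_nested:
  assumes "complete_defseq \<U>" "\<And>n. V n \<in> \<U> (N + n)" "\<And>n. V (Suc n) \<subseteq> V n"
  obtains z where "\<And>n. z \<in> V n"
proof -
  obtain x where x: "x \<in> V 0"
    using partition_element_nonempty[OF assms(2)[of 0]] by blast
  have V0: "V 0 = cell \<U> N x"
    using cell_eqI[of "V 0" N x] assms(2)[of 0] x by simp
  \<comment> \<open>complete the sequence below level N by the cells of a point of V 0\<close>
  define E where "E n = (if n < N then cell \<U> n x else V (n - N))" for n
  have E_in: "E n \<in> \<U> n" for n
    using assms(2)[of "n - N"] cell_in_partition by (cases "n < N") (simp_all add: E_def)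
  have E_nested: "E (Suc n) \<subseteq> E n" for n
  proof -
    consider "Suc n < N" | "Suc n = N" | "N \<le> n"
      by linarith
    then show ?thesis
    proof cases
      case 1
      then show ?thesis
        using cell_antimono[of n "Suc n"] by (simp add: E_def)
    next
      case 2
      then show ?thesis
        using cell_antimono[of n N] V0 by (simp add: E_def)
    next
      case 3
      then show ?thesis
        using assms(3)[of "n - N"] by (simp add: E_def Suc_diff_le)
    qed
  qed
  have "(\<Inter>n. E n) \<noteq> {}"
    by (rule assms(1)[unfolded complete_defseq_def, rule_format]) (simp_all add: E_in E_nested)
  then obtain z where z: "\<And>n. z \<in> E n"
    by blast
  have "z \<in> V n" for n
    using z[of "N + n"] by (simp add: E_def)
  then show thesis
    using that by blast
qed

end

locale tame_defining_seq = defining_seq \<U> for \<U> :: "nat \<Rightarrow> 'a::metric_space set set" +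
  assumes tame: "tame_defseq \<U>"
begin

lemma tame_close_points_same_cell:
  obtains \<rho> where "\<rho> > 0" "\<And>x y. dist x y < \<rho> \<Longrightarrow> cell \<U> n x = cell \<U> n y"
proof -
  have "\<exists>\<rho>>0. \<forall>W\<in>\<U> n. \<forall>W'\<in>\<U> n. W \<noteq> W' \<longrightarrow> (\<forall>x\<in>W. \<forall>y\<in>W'. \<rho> \<le> dist x y)"
    using tame unfolding tame_defseq_def by (elim conjE) (rule spec)
  then obtain \<rho> where "\<rho> > 0"
    and separated: "\<forall>W\<in>\<U> n. \<forall>W'\<in>\<U> n. W \<noteq> W' \<longrightarrow> (\<forall>x\<in>W. \<forall>y\<in>W'. \<rho> \<le> dist x y)"
    by blast
  have same: "cell \<U> n x = cell \<U> n y" if "dist x y < \<rho>" for x y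
  proof (rule ccontr)
    assume "cell \<U> n x \<noteq> cell \<U> n y"
    then have "\<rho> \<le> dist x y"
      using separated[rule_format, OF cell_in_partition cell_in_partition _ mem_cell mem_cell] by blast
    with that show False
      by simp
  qed
  show thesis
    using that[OF \<open>\<rho> > 0\<close> same] .
qed

lemma tame_cells_tendsto:
  assumes "\<And>n. A n \<in> \<U> (N + n)" "\<And>n. a n \<in> A n" "\<And>n. z \<in> A n"
  shows "a \<longlonglongrightarrow> z"
  unfolding lim_sequentially
proof (intro allI impI)
  fix \<epsilon> :: real assume "\<epsilon> > 0"
  then have "\<epsilon> / 2 > 0"
    by simp
  then obtain K where small: "\<And>n W x y. K \<le> n \<Longrightarrow> W \<in> \<U> n \<Longrightarrow> x \<in> W \<Longrightarrow> y \<in> W \<Longrightarrow> dist x y \<le> \<epsilon> / 2"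
    using tame_defseq_small_cells[OF tame] by blast
  have "dist (a n) z < \<epsilon>" if "K \<le> n" for n
  proof -
    have "K \<le> N + n"
      using that by simp
    then have "dist (a n) z \<le> \<epsilon> / 2"
      by (rule small[OF _ assms])
    with \<open>\<epsilon> > 0\<close> show ?thesis
      by simp
  qed
  then show "\<exists>K. \<forall>n\<ge>K. dist (a n) z < \<epsilon>"
    by blast
qed

lemma nested_cells_orbit_step:
  assumes "continuous_on UNIV f" "\<And>n. C n \<in> PO f (\<U> (N + n))" "\<And>n j. z j \<in> C n j"
  shows "f (z j) = z (Suc j)"
proof -
  have "\<forall>n. \<exists>a. a \<in> C n j \<and> f a \<in> C n (Suc j)"
    using assms(2) unfolding PO_def by blast
  then obtain a where a: "\<And>n. a n \<in> C n j" "\<And>n. f (a n) \<in> C n (Suc j)"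
    by metis
  have C_in: "\<And>n j. C n j \<in> \<U> (N + n)"
    using assms(2) unfolding PO_def by blast
  have "a \<longlonglongrightarrow> z j"
    using tame_cells_tendsto[OF C_in a(1) assms(3)] .
  moreover have "isCont f (z j)"
    using assms(1) continuous_on_eq_continuous_at[OF open_UNIV] by blast
  ultimately have "(\<lambda>n. f (a n)) \<longlonglongrightarrow> f (z j)"
    using isCont_tendsto_compose by blast
  moreover have "(\<lambda>n. f (a n)) \<longlonglongrightarrow> z (Suc j)"
    using tame_cells_tendsto[OF C_in a(2) assms(3)] .
  ultimately show ?thesis
    by (rule LIMSEQ_unique)
qed

lemma nested_PO_orbit:
  assumes "complete_defseq \<U>" "continuous_on UNIV f"
    and "\<And>n. C n \<in> PO f (\<U> (N + n))" "\<And>n. C n = hook \<U> (N + n) (C (Suc n))"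
  obtains x where "\<And>n j. (f ^^ j) x \<in> C n j"
proof -
  have C_in: "C n j \<in> \<U> (N + n)" for n j
    using assms(3) unfolding PO_def by blast
  have nested: "C (Suc n) j \<subseteq> C n j" for n j
  proof -
    have "C (Suc n) j \<subseteq> parent (\<U> (N + n)) (C (Suc n) j)"
      using C_in[of "Suc n" j] by (intro parent_in_partition(2)[of "N + n" "N + Suc n"]) simp_all
    also have "\<dots> = C n j"
      using assms(4)[of n] by (simp add: hook_def)
    finally show ?thesis .
  qed
  have "\<exists>z. \<forall>n. z \<in> C n j" for j
  proof -
    obtain z where "\<And>n. z \<in> C n j"
      using complete_defseq_nested[OF assms(1), of "\<lambda>n. C n j" N] C_in nested by blast
    then show ?thesis
      by blast
  qed
  then obtain z where z: "\<And>n j. z j \<in> C n j"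
    by metis
  have orbit: "z j = (f ^^ j) (z 0)" for j
  proof (induction j)
    case (Suc j)
    then show ?case
      using nested_cells_orbit_step[OF assms(2,3) z, of j] by simp
  qed simp
  have "(f ^^ j) (z 0) \<in> C n j" for n j
    using z[of j n] orbit[of j] by simp
  then show thesis
    by (rule that)
qed

lemma shadowing_pseudo_orbit_cells:
  assumes "shadowing f"
  obtains \<delta> where "\<delta> > 0"
    "\<And>xs. \<forall>i. dist (f (xs i)) (xs (Suc i)) < \<delta> \<Longrightarrow> \<exists>x. (\<lambda>j. cell \<U> n (xs j)) = orbit_cells f \<U> n x"
proof -
  obtain \<rho> where "\<rho> > 0" and same: "\<And>x y. dist x y < \<rho> \<Longrightarrow> cell \<U> n x = cell \<U> n y"
    using tame_close_points_same_cell[of n] by blast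
  then obtain \<delta> where "\<delta> > 0" and shadow: "\<And>xs. \<forall>i. dist (f (xs i)) (xs (Suc i)) < \<delta> \<Longrightarrow>
      \<exists>x. \<forall>i. dist ((f ^^ i) x) (xs i) < \<rho>"
    using assms unfolding shadowing_def by blast
  have "\<exists>x. (\<lambda>j. cell \<U> n (xs j)) = orbit_cells f \<U> n x"
    if pseudo: "\<forall>i. dist (f (xs i)) (xs (Suc i)) < \<delta>" for xs
  proof -
    obtain x where "\<forall>i. dist ((f ^^ i) x) (xs i) < \<rho>"
      using shadow[OF pseudo] by blast
    then have "cell \<U> n (xs j) = cell \<U> n ((f ^^ j) x)" for j
      using same by (simp add: dist_commute)
    then show ?thesis
      unfolding orbit_cells_def by blast
  qed
  with \<open>\<delta> > 0\<close> show thesis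
    using that by blast
qed

lemma finite_shadowing_pseudo_orbit_cells_PO:
  assumes "finite_shadowing f"
  obtains \<delta> where "\<delta> > 0"
    "\<And>xs. \<forall>i. dist (f (xs i)) (xs (Suc i)) < \<delta> \<Longrightarrow> (\<lambda>j. cell \<U> n (xs j)) \<in> PO f (\<U> n)"
proof -
  obtain \<rho> where "\<rho> > 0" and same: "\<And>x y. dist x y < \<rho> \<Longrightarrow> cell \<U> n x = cell \<U> n y"
    using tame_close_points_same_cell[of n] by blast
  then obtain \<delta> where "\<delta> > 0" and shadow: "\<And>xs N. \<forall>i<N. dist (f (xs i)) (xs (Suc i)) < \<delta> \<Longrightarrow>
      \<exists>x. \<forall>i\<le>N. dist ((f ^^ i) x) (xs i) < \<rho>"
    using assms unfolding finite_shadowing_def by blast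
  have "(\<lambda>j. cell \<U> n (xs j)) \<in> PO f (\<U> n)"
    if pseudo: "\<forall>i. dist (f (xs i)) (xs (Suc i)) < \<delta>" for xs
  proof -
    have "f ` cell \<U> n (xs j) \<inter> cell \<U> n (xs (Suc j)) \<noteq> {}" for j
    proof -
      obtain x where x: "\<forall>i\<le>Suc j. dist ((f ^^ i) x) (xs i) < \<rho>"
        using shadow pseudo by blast
      have "cell \<U> n (xs i) = cell \<U> n ((f ^^ i) x)" if "i \<le> Suc j" for i
        using same x that by (simp add: dist_commute)
      then have "f ((f ^^ j) x) \<in> f ` cell \<U> n (xs j) \<inter> cell \<U> n (xs (Suc j))"
        using mem_cell by simp
      then show ?thesis
        by blast
    qed
    then show ?thesis
      unfolding PO_def using cell_in_partition by blast
  qed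
  with \<open>\<delta> > 0\<close> show thesis
    using that by blast
qed

lemma shadowing_hook_eq_orbit_cells:
  assumes "shadowing f"
  obtains K where "N \<le> K" "\<And>n W. K \<le> n \<Longrightarrow> W \<in> PO f (\<U> n) \<Longrightarrow> \<exists>x. hook \<U> N W = orbit_cells f \<U> N x"
proof -
  obtain \<delta> where "\<delta> > 0" and orbit: "\<And>xs. \<forall>i. dist (f (xs i)) (xs (Suc i)) < \<delta> \<Longrightarrow>
      \<exists>x. (\<lambda>j. cell \<U> N (xs j)) = orbit_cells f \<U> N x"
    by (rule shadowing_pseudo_orbit_cells[OF assms]) blast
  then have "\<delta> / 2 > 0"
    by simp
  then obtain K where small: "\<And>n W x y. K \<le> n \<Longrightarrow> W \<in> \<U> n \<Longrightarrow> x \<in> W \<Longrightarrow> y \<in> W \<Longrightarrow> dist x y \<le> \<delta> / 2"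
    using tame_defseq_small_cells[OF tame] by blast
  have realised: "\<exists>x. hook \<U> N W = orbit_cells f \<U> N x"
    if n_large: "max N K \<le> n" and W: "W \<in> PO f (\<U> n)" for n W
  proof -
    obtain y where y: "\<And>j. y j \<in> W j" "\<And>j. f (y j) \<in> W (Suc j)"
      using PO_choose_points[OF W] by blast
    have W_in: "\<And>j. W j \<in> \<U> n"
      using W unfolding PO_def by blast
    have "K \<le> n"
      using n_large by simp
    have close: "dist (f (y i)) (y (Suc i)) \<le> \<delta> / 2" for i
      by (rule small[OF \<open>K \<le> n\<close> W_in y(2) y(1)])
    have "dist (f (y i)) (y (Suc i)) < \<delta>" for i
      using close[of i] \<open>\<delta> > 0\<close> by linarith
    then have "\<forall>i. dist (f (y i)) (y (Suc i)) < \<delta>"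
      by blast
    then have "\<exists>x. (\<lambda>j. cell \<U> N (y j)) = orbit_cells f \<U> N x"
      by (rule orbit)
    moreover have "hook \<U> N W = (\<lambda>j. cell \<U> N (y j))"
      using hook_eq_cells[OF _ W_in y(1)] n_large by simp
    ultimately show ?thesis
      by simp
  qed
  show thesis
    by (rule that[of "max N K"]) (simp_all add: realised)
qed

lemma shadowing_imp_mittag_leffler:
  assumes "shadowing f"
  shows "mittag_leffler (hook \<U>) (\<lambda>n. PO f (\<U> n))"
  unfolding mittag_leffler_hook_iff
proof
  fix N
  obtain K where "N \<le> K"
    and orbit: "\<And>n W. K \<le> n \<Longrightarrow> W \<in> PO f (\<U> n) \<Longrightarrow> \<exists>x. hook \<U> N W = orbit_cells f \<U> N x"
    by (rule shadowing_hook_eq_orbit_cells[OF assms]) blast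
  show "\<exists>k>N. \<forall>i\<ge>k. hook \<U> N ` PO f (\<U> (Suc k)) = hook \<U> N ` PO f (\<U> (Suc i))"
  proof (intro exI[of _ "Suc K"] conjI allI impI)
    show "N < Suc K"
      using \<open>N \<le> K\<close> by simp
  next
    fix i assume "Suc K \<le> i"
    show "hook \<U> N ` PO f (\<U> (Suc (Suc K))) = hook \<U> N ` PO f (\<U> (Suc i))"
    proof
      show "hook \<U> N ` PO f (\<U> (Suc i)) \<subseteq> hook \<U> N ` PO f (\<U> (Suc (Suc K)))"
        using hook_image_antimono \<open>N \<le> K\<close> \<open>Suc K \<le> i\<close> by simp
    next
      show "hook \<U> N ` PO f (\<U> (Suc (Suc K))) \<subseteq> hook \<U> N ` PO f (\<U> (Suc i))"
      proof
        fix V assume "V \<in> hook \<U> N ` PO f (\<U> (Suc (Suc K)))"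
        then obtain W where "W \<in> PO f (\<U> (Suc (Suc K)))" "V = hook \<U> N W"
          by blast
        then obtain x where "V = orbit_cells f \<U> N x"
          using orbit[of "Suc (Suc K)" W] by auto
        \<comment> \<open>an element realised by a true orbit survives in every image\<close>
        also have "\<dots> = hook \<U> N (orbit_cells f \<U> (Suc i) x)"
          using hook_orbit_cells \<open>N \<le> K\<close> \<open>Suc K \<le> i\<close> by simp
        finally show "V \<in> hook \<U> N ` PO f (\<U> (Suc i))"
          using orbit_cells_PO by blast
      qed
    qed
  qed
qed

lemma finite_shadowing_mittag_leffler_imp_shadowing:
  assumes "complete_defseq \<U>" "continuous_on UNIV f"
    and "finite_shadowing f" "mittag_leffler (hook \<U>) (\<lambda>n. PO f (\<U> n))"
  shows "shadowing f"
  unfolding shadowing_def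
proof (intro allI impI)
  fix \<epsilon> :: real assume "\<epsilon> > 0"
  obtain k where k: "\<And>N. N < k N"
    and thread: "\<And>N V. V \<in> hook \<U> N ` PO f (\<U> (Suc (k N))) \<Longrightarrow>
       \<exists>C. C 0 = V \<and> (\<forall>n. C n \<in> PO f (\<U> (N + n)) \<and> C n = hook \<U> (N + n) (C (Suc n)))"
    by (rule mittag_leffler_threads[OF assms(4)]) blast
  have "\<epsilon> / 2 > 0"
    using \<open>\<epsilon> > 0\<close> by simp
  then obtain N where small: "\<And>n W x y. N \<le> n \<Longrightarrow> W \<in> \<U> n \<Longrightarrow> x \<in> W \<Longrightarrow> y \<in> W \<Longrightarrow> dist x y \<le> \<epsilon> / 2"
    using tame_defseq_small_cells[OF tame] by blast
  obtain \<delta> where "\<delta> > 0" and pseudo_PO: "\<And>xs. \<forall>i. dist (f (xs i)) (xs (Suc i)) < \<delta> \<Longrightarrow>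
      (\<lambda>j. cell \<U> (Suc (k N)) (xs j)) \<in> PO f (\<U> (Suc (k N)))"
    by (rule finite_shadowing_pseudo_orbit_cells_PO[OF assms(3)]) blast
  have "\<exists>x. \<forall>i. dist ((f ^^ i) x) (xs i) < \<epsilon>"
    if pseudo: "\<forall>i. dist (f (xs i)) (xs (Suc i)) < \<delta>" for xs
  proof -
    have "N \<le> Suc (k N)"
      using k[of N] by simp
    then have V: "hook \<U> N (\<lambda>j. cell \<U> (Suc (k N)) (xs j)) = (\<lambda>j. cell \<U> N (xs j))"
      by (rule hook_eq_cells[OF _ cell_in_partition mem_cell])
    have "hook \<U> N (\<lambda>j. cell \<U> (Suc (k N)) (xs j)) \<in> hook \<U> N ` PO f (\<U> (Suc (k N)))"
      using pseudo_PO[OF pseudo] by (rule imageI)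
    then obtain C where C0: "C 0 = (\<lambda>j. cell \<U> N (xs j))"
      and C: "\<And>n. C n \<in> PO f (\<U> (N + n))" "\<And>n. C n = hook \<U> (N + n) (C (Suc n))"
      using thread V by metis
    obtain x where x: "\<And>n j. (f ^^ j) x \<in> C n j"
      using nested_PO_orbit[OF assms(1,2) C] by blast
    have "(f ^^ i) x \<in> cell \<U> N (xs i)" for i
      using x[of i 0] C0 by simp
    then have close: "dist ((f ^^ i) x) (xs i) \<le> \<epsilon> / 2" for i
      by (rule small[OF order_refl cell_in_partition _ mem_cell])
    have "dist ((f ^^ i) x) (xs i) < \<epsilon>" for i
      using close[of i] \<open>\<epsilon> > 0\<close> by linarith
    then show ?thesis
      by blast
  qed
  with \<open>\<delta> > 0\<close> show "\<exists>\<delta>>0. \<forall>xs. (\<forall>i. dist (f (xs i)) (xs (Suc i)) < \<delta>) \<longrightarrow>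
      (\<exists>x. \<forall>i. dist ((f ^^ i) x) (xs i) < \<epsilon>)"
    by blast
qed

end

theorem theorem4p16:
  fixes f :: "'a::metric_space \<Rightarrow> 'a" and \<U> :: "nat \<Rightarrow> 'a set set"
  assumes sep: "separable_space TYPE('a)"
    and cont: "continuous_on UNIV f"
    and defseq: "defining_sequence \<U>"
    and tame: "tame_defseq \<U>"
  shows "(shadowing f \<longrightarrow>
            finite_shadowing f \<and> mittag_leffler (hook \<U>) (\<lambda>n. PO f (\<U> n)))
       \<and> (complete_defseq \<U> \<and> uniformly_continuous_on UNIV f \<longrightarrow>
            finite_shadowing f \<and> mittag_leffler (hook \<U>) (\<lambda>n. PO f (\<U> n)) \<longrightarrow>
            shadowing f)"
proof -
  interpret tame_defining_seq \<U>
    using defseq tame by unfold_locales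
  show ?thesis
  proof (intro conjI impI)
    assume "shadowing f"
    then show "finite_shadowing f" "mittag_leffler (hook \<U>) (\<lambda>n. PO f (\<U> n))"
      by (rule shadowing_imp_finite_shadowing, rule shadowing_imp_mittag_leffler)
  next
    assume "complete_defseq \<U> \<and> uniformly_continuous_on UNIV f"
      and "finite_shadowing f \<and> mittag_leffler (hook \<U>) (\<lambda>n. PO f (\<U> n))"
    then show "shadowing f"
      using finite_shadowing_mittag_leffler_imp_shadowing[OF _ cont] by blast
  qed
qed

end
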